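(* Let $\mathcal{M}=(W,\leq,R,V^+,V^-)$ be a Nelsonian conditional model and define $\mathcal{M}^i=(W^i,\leq^i,R^i,V^i)$ by: $W^i:=W\cup R$; $\leq^i:=\leq\cup\{((w,(X,Y),v),(w',(X,Y),v'))\mid w\leq w',\,v\leq v'\}$ (for triples in $R$); $R^i:=\{(w,X',(w,(X,Y),v)),((w,(X,Y),v),Y',v)\mid (w,(X,Y),v)\in R,\,X'\cap W=X,\,Y'\cap W=Y\}$; $V^i(p_i):=V^+(p_i)$ and $V^i(q_i):=V^-(p_i)$. Then (1) $\mathcal{M}^i$ is an extended conditional intuitionistic model, and (2) for every $w\in W$ and every $\phi\in\mathcal{L}_{\Box\!\!\rightarrow}$, $\mathcal{M},w\models^+\phi$ iff $\mathcal{M}^i,w\models^i E^\pm(\phi)$.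
   Context: $\mathcal{L}_{\Box\!\!\rightarrow}$ is built from variables $p_0,p_1,\dots$ with $\wedge,\vee,\to$, strong negation $\sim$, and a binary would-conditional $\Box\!\!\rightarrow$. A Nelsonian conditional model is $(W,\leq,R,V^+,V^-)$ with $W\neq\emptyset$, $\leq$ a preorder, $V^\pm$ assigning upward-closed sets to variables, $R\subseteq W\times(\mathcal{P}(W)\times\mathcal{P}(W))\times W$ satisfying for all $X,Y$: (c1) $w\leq w'$ and $R_{(X,Y)}(w,v)$ imply $R_{(X,Y)}(w',v')$ for some $v'\geq v$; (c2) $R_{(X,Y)}(w,v)$ and $v\leq v'$ imply $R_{(X,Y)}(w',v')$ for some $w'\geq w$. Verification $\models^+$/falsification $\models^-$: atoms by $V^\pm$; $\wedge$ verified iff both verified, falsified iff one falsified; $\vee$ dually; $\sim$ swaps; $w\models^+\psi\to\chi$ iff for all $v\geq w$, $v\models^+\psi$ implies $v\models^+\chi$; $w\models^-\psi\to\chi$ iff $w\models^+\psi$ and $w\models^-\chi$; $w\models^+\psi\Box\!\!\rightarrow\chi$ iff for all $v\geq w$ and $u$ with $R_{\|\psi\|}(v,u)$, $u\models^+\chi$; $w\models^-\psi\Box\!\!\rightarrow\chi$ iff some $u$ has $R_{\|\psi\|}(w,u)$ and $u\models^-\chi$; $\|\psi\|=(\{w\mid w\models^+\psi\},\{w\mid w\models^-\psi\})$. The target language $\mathcal{L}^{e+}_{(\Box\!\!\rightarrow,\Diamond\!\!\rightarrow)}$ has variables $p_i$ and extra variables $q_i$, connectives $\wedge,\vee,\to$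 and primitive binary $\Box\!\!\rightarrow$, $\Diamond\!\!\rightarrow$ (no negation). An extended conditional intuitionistic model is $(W,\leq,R,V)$ with $\leq$ a preorder, $V$ assigning upward-closed sets to all $p_i,q_i$, $R\subseteq W\times\mathcal{P}(W)\times W$ such that for all $X$: if $w\leq w'$ and $R_X(w,v)$ then $R_X(w',v')$ for some $v'\geq v$; if $R_X(w,v)$ and $v\leq v'$ then $R_X(w',v')$ for some $w'\geq w$. $\models^i$: atoms by $V$; $\wedge,\vee$ classical at a point; $w\models^i\psi\to\chi$ iff for all $v\geq w$, $v\models^i\psi$ implies $v\models^i\chi$; $w\models^i\psi\Box\!\!\rightarrow\chi$ iff for all $v\geq w$ and $u$ with $R_{\|\psi\|^i}(v,u)$, $u\models^i\chi$; $w\models^i\psi\Diamond\!\!\rightarrow\chi$ iff some $u$ has $R_{\|\psi\|^i}(w,u)$ and $u\models^i\chi$; $\|\psi\|^i=\{w\mid w\models^i\psi\}$. The translation $E^\pm$: $E^\pm(p_i)=p_i$, $E^\pm(\sim p_i)=q_i$, $E^\pm(\phi\wedge\psi)=E^\pm(\phi)\wedge E^\pm(\psi)$, $E^\pm(\sim(\phi\wedge\psi))=E^\pm(\sim\phi)\vee E^\pm(\sim\psi)$, $E^\pm(\phi\vee\psi)=E^\pm(\phi)\vee E^\pm(\psi)$, $E^\pm(\sim(\phi\vee\psi))=E^\pm(\sim\phi)\wedge E^\pm(\sim\psi)$, $E^\pm(\sim\sim\phi)=E^\pm(\phi)$, $E^\pm(\phi\to\psi)=E^\pm(\phi)\to E^\pm(\psi)$,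 $E^\pm(\sim(\phi\to\psi))=E^\pm(\phi)\wedge E^\pm(\sim\psi)$, $E^\pm(\phi\Box\!\!\rightarrow\psi)=E^\pm(\phi)\Box\!\!\rightarrow(E^\pm(\sim\phi)\Box\!\!\rightarrow E^\pm(\psi))$, $E^\pm(\sim(\phi\Box\!\!\rightarrow\psi))=E^\pm(\phi)\Diamond\!\!\rightarrow(E^\pm(\sim\phi)\Diamond\!\!\rightarrow E^\pm(\sim\psi))$. *)

theory Defs
  imports Main
begin

datatype form =
    Var nat
  | Neg form            (* strong negation ~ *)
  | And form form
  | Or form form
  | Imp form form
  | Cond form form

type_synonym 'w ntriple = "'w \<times> ('w set \<times> 'w set) \<times> 'w"

definition nelson_model ::
  "'w set \<Rightarrow> ('w \<times> 'w) set \<Rightarrow> 'w ntriple set \<Rightarrow> (nat \<Rightarrow> 'w set) \<Rightarrow> (nat \<Rightarrow> 'w set) \<Rightarrow> bool"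
where
  "nelson_model W le R Vp Vm \<longleftrightarrow>
     W \<noteq> {} \<and>
     le \<subseteq> W \<times> W \<and> (\<forall>w\<in>W. (w, w) \<in> le) \<and> trans le \<and>
     (\<forall>i. Vp i \<subseteq> W \<and> (\<forall>w w'. w \<in> Vp i \<and> (w, w') \<in> le \<longrightarrow> w' \<in> Vp i)) \<and>
     (\<forall>i. Vm i \<subseteq> W \<and> (\<forall>w w'. w \<in> Vm i \<and> (w, w') \<in> le \<longrightarrow> w' \<in> Vm i)) \<and>
     R \<subseteq> W \<times> (Pow W \<times> Pow W) \<times> W \<and>
     (\<forall>X Y w w' v. (w, w') \<in> le \<and> (w, (X, Y), v) \<in> R \<longrightarrow>
         (\<exists>v'. (v, v') \<in> le \<and> (w', (X, Y), v') \<in> R)) \<and>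
     (\<forall>X Y w v v'. (w, (X, Y), v) \<in> R \<and> (v, v') \<in> le \<longrightarrow>
         (\<exists>w'. (w, w') \<in> le \<and> (w', (X, Y), v') \<in> R))"

text \<open>Verification (pol = True) and falsification (pol = False).\<close>
primrec nsem ::
  "'w set \<Rightarrow> ('w \<times> 'w) set \<Rightarrow> 'w ntriple set \<Rightarrow> (nat \<Rightarrow> 'w set) \<Rightarrow> (nat \<Rightarrow> 'w set)
   \<Rightarrow> form \<Rightarrow> bool \<Rightarrow> 'w \<Rightarrow> bool"
where
  "nsem W le R Vp Vm (Var i) pol w = (if pol then w \<in> Vp i else w \<in> Vm i)"
| "nsem W le R Vp Vm (Neg a) pol w = nsem W le R Vp Vm a (\<not> pol) w"
| "nsem W le R Vp Vm (And a b) pol w =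
     (if pol then nsem W le R Vp Vm a True w \<and> nsem W le R Vp Vm b True w
      else nsem W le R Vp Vm a False w \<or> nsem W le R Vp Vm b False w)"
| "nsem W le R Vp Vm (Or a b) pol w =
     (if pol then nsem W le R Vp Vm a True w \<or> nsem W le R Vp Vm b True w
      else nsem W le R Vp Vm a False w \<and> nsem W le R Vp Vm b False w)"
| "nsem W le R Vp Vm (Imp a b) pol w =
     (if pol then (\<forall>v. (w, v) \<in> le \<longrightarrow> nsem W le R Vp Vm a True v \<longrightarrow> nsem W le R Vp Vm b True v)
      else nsem W le R Vp Vm a True w \<and> nsem W le R Vp Vm b False w)"
| "nsem W le R Vp Vm (Cond a b) pol w =
     (let X = {x \<in> W. nsem W le R Vp Vm a True x}; Y = {x \<in> W. nsem W le R Vp Vm a False x} in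
      if pol then (\<forall>v u. (w, v) \<in> le \<and> (v, (X, Y), u) \<in> R \<longrightarrow> nsem W le R Vp Vm b True u)
      else (\<exists>u. (w, (X, Y), u) \<in> R \<and> nsem W le R Vp Vm b False u))"

datatype iatom = PA nat | QA nat

datatype iform =
    IP nat | IQ nat
  | IAnd iform iform | IOr iform iform | IImp iform iform
  | IBox iform iform | IDia iform iform

definition ecim ::
  "'a set \<Rightarrow> ('a \<times> 'a) set \<Rightarrow> ('a \<times> 'a set \<times> 'a) set \<Rightarrow> (iatom \<Rightarrow> 'a set) \<Rightarrow> bool"
where
  "ecim W le R V \<longleftrightarrow>
     W \<noteq> {} \<and>
     le \<subseteq> W \<times> W \<and> (\<forall>w\<in>W. (w, w) \<in> le) \<and> trans le \<and>
     (\<forall>a. V a \<subseteq> W \<and> (\<forall>w w'. w \<in> V a \<and> (w, w') \<in> le \<longrightarrow> w' \<in> V a)) \<and>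
     R \<subseteq> W \<times> Pow W \<times> W \<and>
     (\<forall>X w w' v. (w, w') \<in> le \<and> (w, X, v) \<in> R \<longrightarrow>
         (\<exists>v'. (v, v') \<in> le \<and> (w', X, v') \<in> R)) \<and>
     (\<forall>X w v v'. (w, X, v) \<in> R \<and> (v, v') \<in> le \<longrightarrow>
         (\<exists>w'. (w, w') \<in> le \<and> (w', X, v') \<in> R))"

primrec isem ::
  "'a set \<Rightarrow> ('a \<times> 'a) set \<Rightarrow> ('a \<times> 'a set \<times> 'a) set \<Rightarrow> (iatom \<Rightarrow> 'a set) \<Rightarrow> iform \<Rightarrow> 'a \<Rightarrow> bool"
where
  "isem W le R V (IP i) w = (w \<in> V (PA i))"
| "isem W le R V (IQ i) w = (w \<in> V (QA i))"
| "isem W le R V (IAnd a b) w = (isem W le R V a w \<and> isem W le R V b w)"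
| "isem W le R V (IOr a b) w = (isem W le R V a w \<or> isem W le R V b w)"
| "isem W le R V (IImp a b) w =
     (\<forall>v. (w, v) \<in> le \<longrightarrow> isem W le R V a v \<longrightarrow> isem W le R V b v)"
| "isem W le R V (IBox a b) w =
     (let X = {x \<in> W. isem W le R V a x} in
      \<forall>v u. (w, v) \<in> le \<and> (v, X, u) \<in> R \<longrightarrow> isem W le R V b u)"
| "isem W le R V (IDia a b) w =
     (let X = {x \<in> W. isem W le R V a x} in
      \<exists>u. (w, X, u) \<in> R \<and> isem W le R V b u)"

fun fweight :: "form \<Rightarrow> nat" where
  "fweight (Var i) = 1"
| "fweight (Neg a) = fweight a + 1"
| "fweight (And a b) = fweight a + fweight b + 2"
| "fweight (Or a b) = fweight a + fweight b + 2"
| "fweight (Imp a b) = fweight a + fweight b + 2"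
| "fweight (Cond a b) = fweight a + fweight b + 2"

function Etr :: "form \<Rightarrow> iform" where
  "Etr (Var i) = IP i"
| "Etr (Neg (Var i)) = IQ i"
| "Etr (And a b) = IAnd (Etr a) (Etr b)"
| "Etr (Neg (And a b)) = IOr (Etr (Neg a)) (Etr (Neg b))"
| "Etr (Or a b) = IOr (Etr a) (Etr b)"
| "Etr (Neg (Or a b)) = IAnd (Etr (Neg a)) (Etr (Neg b))"
| "Etr (Neg (Neg a)) = Etr a"
| "Etr (Imp a b) = IImp (Etr a) (Etr b)"
| "Etr (Neg (Imp a b)) = IAnd (Etr a) (Etr (Neg b))"
| "Etr (Cond a b) = IBox (Etr a) (IBox (Etr (Neg a)) (Etr b))"
| "Etr (Neg (Cond a b)) = IDia (Etr a) (IDia (Etr (Neg a)) (Etr (Neg b)))"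
  by pat_completeness auto
termination by (relation "measure fweight") auto

section \<open>The model M^i; worlds are Inl w (w in W) and Inr t (t a triple in R)\<close>

type_synonym 'w iworld = "'w + 'w ntriple"

definition Wi :: "'w set \<Rightarrow> 'w ntriple set \<Rightarrow> 'w iworld set" where
  "Wi W R = Inl ` W \<union> Inr ` R"

definition lei :: "('w \<times> 'w) set \<Rightarrow> 'w ntriple set \<Rightarrow> ('w iworld \<times> 'w iworld) set" where
  "lei le R =
     {(Inl a, Inl b) | a b. (a, b) \<in> le} \<union>
     {(Inr (w, (X, Y), v), Inr (w', (X, Y), v')) | w X Y v w' v'.
        (w, (X, Y), v) \<in> R \<and> (w', (X, Y), v') \<in> R \<and> (w, w') \<in> le \<and> (v, v') \<in> le}"

definition Ri :: "'w set \<Rightarrow> 'w ntriple set \<Rightarrow> ('w iworld \<times> 'w iworld set \<times> 'w iworld) set" where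
  "Ri W R =
     {(Inl w, X', Inr (w, (X, Y), v)) | w X Y v X'.
        (w, (X, Y), v) \<in> R \<and> X' \<subseteq> Wi W R \<and> {x. Inl x \<in> X'} = X} \<union>
     {(Inr (w, (X, Y), v), Y', Inl v) | w X Y v Y'.
        (w, (X, Y), v) \<in> R \<and> Y' \<subseteq> Wi W R \<and> {x. Inl x \<in> Y'} = Y}"

fun Vi :: "(nat \<Rightarrow> 'w set) \<Rightarrow> (nat \<Rightarrow> 'w set) \<Rightarrow> iatom \<Rightarrow> 'w iworld set" where
  "Vi Vp Vm (PA i) = Inl ` Vp i"
| "Vi Vp Vm (QA i) = Inl ` Vm i"

end

theory Submission
  imports Defs
begin

text \<open>Worlds of \<open>M\<^sup>i\<close> alternate between old worlds \<open>Inl w\<close> and triples \<open>Inr (w, (X, Y), v)\<close>,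
  so a single \<open>R\<close>-step \<open>w \<rightarrow> v\<close> under \<open>(X, Y)\<close> is simulated by two \<open>R\<^sup>i\<close>-steps, the first
  labelled by (an extension of) \<open>X\<close>, the second by (an extension of) \<open>Y\<close>. Hence the nested
  modalities \<open>\<phi> \<box>\<rightarrow> (\<sim>\<phi> \<box>\<rightarrow> \<psi>)\<close> and \<open>\<phi> \<diamond>\<rightarrow> (\<sim>\<phi> \<diamond>\<rightarrow> \<psi>)\<close> evaluated at an old world read off
  exactly the Nelsonian clauses for \<open>\<phi> \<box>\<rightarrow> \<psi>\<close>, once the truth sets of \<open>E(\<phi>)\<close> and \<open>E(\<sim>\<phi>)\<close>
  are known to restrict on \<open>W\<close> to the verification and falsification sets of \<open>\<phi>\<close>. The
  translation is then correct by a simultaneous induction for \<open>\<phi>\<close> and \<open>\<sim>\<phi>\<close>.\<close>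

lemma Inl_in_Wi_iff: "Inl x \<in> Wi W R \<longleftrightarrow> x \<in> W"
  unfolding Wi_def by auto

lemma Inl_lei_iff: "(Inl a, y) \<in> lei le R \<longleftrightarrow> (\<exists>b. y = Inl b \<and> (a, b) \<in> le)"
  unfolding lei_def by auto

lemma Inr_lei_iff:
  "(Inr (w, (X, Y), v), y) \<in> lei le R \<longleftrightarrow>
     (\<exists>w' v'. y = Inr (w', (X, Y), v') \<and> (w, (X, Y), v) \<in> R \<and> (w', (X, Y), v') \<in> R \<and>
             (w, w') \<in> le \<and> (v, v') \<in> le)"
  unfolding lei_def by auto

lemma Inl_Ri_iff:
  "(Inl w, A, u) \<in> Ri W R \<longleftrightarrow>
     (\<exists>Y v. u = Inr (w, (Inl -` A, Y), v) \<and> (w, (Inl -` A, Y), v) \<in> R \<and> A \<subseteq> Wi W R)"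
  unfolding Ri_def vimage_def by auto

lemma Inr_Ri_iff:
  "(Inr (w, (X, Y), v), B, u) \<in> Ri W R \<longleftrightarrow>
     u = Inl v \<and> (w, (X, Y), v) \<in> R \<and> B \<subseteq> Wi W R \<and> Inl -` B = Y"
  unfolding Ri_def vimage_def by auto

lemma lei_subset: "le \<subseteq> W \<times> W \<Longrightarrow> lei le R \<subseteq> Wi W R \<times> Wi W R"
  unfolding lei_def Wi_def by auto

lemma trans_lei: "trans le \<Longrightarrow> trans (lei le R)"
  unfolding trans_def lei_def by blast

lemma lei_refl:
  assumes "\<forall>w\<in>W. (w, w) \<in> le" and "R \<subseteq> W \<times> UNIV \<times> W" and "x \<in> Wi W R"
  shows "(x, x) \<in> lei le R"
  using assms unfolding lei_def Wi_def by fastforce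

lemma Ri_subset: "R \<subseteq> W \<times> UNIV \<times> W \<Longrightarrow> Ri W R \<subseteq> Wi W R \<times> Pow (Wi W R) \<times> Wi W R"
  unfolding Ri_def Wi_def by fastforce

lemma Vi_upward_closed:
  assumes "\<forall>i. Vp i \<subseteq> W \<and> (\<forall>w w'. w \<in> Vp i \<and> (w, w') \<in> le \<longrightarrow> w' \<in> Vp i)"
    and "\<forall>i. Vm i \<subseteq> W \<and> (\<forall>w w'. w \<in> Vm i \<and> (w, w') \<in> le \<longrightarrow> w' \<in> Vm i)"
  shows "Vi Vp Vm a \<subseteq> Wi W R \<and> (\<forall>x x'. x \<in> Vi Vp Vm a \<and> (x, x') \<in> lei le R \<longrightarrow> x' \<in> Vi Vp Vm a)"
  using assms by (cases a) (auto simp: Wi_def Inl_lei_iff subset_eq)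

lemma Ri_forth:
  assumes R_forth: "\<forall>X Y w w' v. (w, w') \<in> le \<and> (w, (X, Y), v) \<in> R \<longrightarrow>
                    (\<exists>v'. (v, v') \<in> le \<and> (w', (X, Y), v') \<in> R)"
    and x: "(x, x') \<in> lei le R" and u: "(x, A, u) \<in> Ri W R"
  shows "\<exists>u'. (u, u') \<in> lei le R \<and> (x', A, u') \<in> Ri W R"
proof (cases x)
  case (Inl a)
  with x obtain b where b: "x' = Inl b" "(a, b) \<in> le" by (auto simp: Inl_lei_iff)
  from u Inl obtain Y v where v: "u = Inr (a, (Inl -` A, Y), v)" "(a, (Inl -` A, Y), v) \<in> R"
    "A \<subseteq> Wi W R" by (auto simp: Inl_Ri_iff)
  with R_forth b obtain v' where "(v, v') \<in> le" "(b, (Inl -` A, Y), v') \<in> R" by blast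
  with b v show ?thesis by (auto simp: Inr_lei_iff Inl_Ri_iff)
next
  case (Inr t)
  then obtain a X Y v where t: "x = Inr (a, (X, Y), v)" by (cases t) auto
  with x obtain a' v' where "x' = Inr (a', (X, Y), v')" "(a', (X, Y), v') \<in> R" "(v, v') \<in> le"
    by (auto simp: Inr_lei_iff)
  with u t show ?thesis by (auto simp: Inl_lei_iff Inr_Ri_iff)
qed

lemma Ri_back:
  assumes R_back: "\<forall>X Y w v v'. (w, (X, Y), v) \<in> R \<and> (v, v') \<in> le \<longrightarrow>
                   (\<exists>w'. (w, w') \<in> le \<and> (w', (X, Y), v') \<in> R)"
    and u: "(x, A, u) \<in> Ri W R" and u': "(u, u') \<in> lei le R"
  shows "\<exists>x'. (x, x') \<in> lei le R \<and> (x', A, u') \<in> Ri W R"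
proof (cases x)
  case (Inl a)
  with u obtain Y v where v: "u = Inr (a, (Inl -` A, Y), v)" "A \<subseteq> Wi W R" by (auto simp: Inl_Ri_iff)
  with u' obtain a' v' where "u' = Inr (a', (Inl -` A, Y), v')" "(a', (Inl -` A, Y), v') \<in> R"
    "(a, a') \<in> le" by (auto simp: Inr_lei_iff)
  with Inl v show ?thesis by (auto simp: Inl_lei_iff Inl_Ri_iff)
next
  case (Inr t)
  then obtain a X Y v where t: "x = Inr (a, (X, Y), v)" by (cases t) auto
  with u have v: "u = Inl v" "(a, (X, Y), v) \<in> R" "A \<subseteq> Wi W R" "Inl -` A = Y"
    by (auto simp: Inr_Ri_iff)
  with u' obtain b where b: "u' = Inl b" "(v, b) \<in> le" by (auto simp: Inl_lei_iff)
  with R_back v obtain a' where "(a, a') \<in> le" "(a', (X, Y), b) \<in> R" by blast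
  with t b v have "(x, Inr (a', (X, Y), b)) \<in> lei le R" "(Inr (a', (X, Y), b), A, u') \<in> Ri W R"
    by (simp_all add: Inr_lei_iff Inr_Ri_iff)
  then show ?thesis by blast
qed

lemma ecim_Mi:
  assumes "nelson_model W le R Vp Vm"
  shows "ecim (Wi W R) (lei le R) (Ri W R) (Vi Vp Vm)"
proof -
  from assms have "W \<noteq> {}" and le: "le \<subseteq> W \<times> W" and refl: "\<forall>w\<in>W. (w, w) \<in> le"
    and "trans le" and RW: "R \<subseteq> W \<times> (Pow W \<times> Pow W) \<times> W"
    and Vp: "\<forall>i. Vp i \<subseteq> W \<and> (\<forall>w w'. w \<in> Vp i \<and> (w, w') \<in> le \<longrightarrow> w' \<in> Vp i)"
    and Vm: "\<forall>i. Vm i \<subseteq> W \<and> (\<forall>w w'. w \<in> Vm i \<and> (w, w') \<in> le \<longrightarrow> w' \<in> Vm i)"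
    and R_forth: "\<forall>X Y w w' v. (w, w') \<in> le \<and> (w, (X, Y), v) \<in> R \<longrightarrow>
                  (\<exists>v'. (v, v') \<in> le \<and> (w', (X, Y), v') \<in> R)"
    and R_back: "\<forall>X Y w v v'. (w, (X, Y), v) \<in> R \<and> (v, v') \<in> le \<longrightarrow>
                 (\<exists>w'. (w, w') \<in> le \<and> (w', (X, Y), v') \<in> R)"
    unfolding nelson_model_def by simp_all
  from RW have R: "R \<subseteq> W \<times> UNIV \<times> W" by blast
  show ?thesis
    unfolding ecim_def
  proof (intro conjI)
    show "Wi W R \<noteq> {}" using \<open>W \<noteq> {}\<close> by (simp add: Wi_def)
    show "\<forall>x\<in>Wi W R. (x, x) \<in> lei le R" using lei_refl[OF refl R] by blast
    show "\<forall>a. Vi Vp Vm a \<subseteq> Wi W R \<and>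
            (\<forall>x x'. x \<in> Vi Vp Vm a \<and> (x, x') \<in> lei le R \<longrightarrow> x' \<in> Vi Vp Vm a)"
      using Vi_upward_closed[OF Vp Vm] by blast
    show "\<forall>A x x' u. (x, x') \<in> lei le R \<and> (x, A, u) \<in> Ri W R \<longrightarrow>
            (\<exists>u'. (u, u') \<in> lei le R \<and> (x', A, u') \<in> Ri W R)"
      using Ri_forth[OF R_forth] by blast
    show "\<forall>A x u u'. (x, A, u) \<in> Ri W R \<and> (u, u') \<in> lei le R \<longrightarrow>
            (\<exists>x'. (x, x') \<in> lei le R \<and> (x', A, u') \<in> Ri W R)"
      using Ri_back[OF R_back] by blast
  qed (fact lei_subset[OF le] trans_lei[OF \<open>trans le\<close>] Ri_subset[OF R])+
qed

lemma Ri_box_box_Inl: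
  assumes refl: "\<forall>w\<in>W. (w, w) \<in> le" and "trans le" and R: "R \<subseteq> W \<times> UNIV \<times> W"
    and A: "A \<subseteq> Wi W R" and B: "B \<subseteq> Wi W R"
  shows "(\<forall>x t. (Inl w, x) \<in> lei le R \<and> (x, A, t) \<in> Ri W R \<longrightarrow>
            (\<forall>y u. (t, y) \<in> lei le R \<and> (y, B, u) \<in> Ri W R \<longrightarrow> P u)) \<longleftrightarrow>
         (\<forall>v u. (w, v) \<in> le \<and> (v, (Inl -` A, Inl -` B), u) \<in> R \<longrightarrow> P (Inl u))"
    (is "?box \<longleftrightarrow> ?cond")
proof
  assume ?box
  show ?cond
  proof (intro allI impI, elim conjE)
    fix v u assume wv: "(w, v) \<in> le" and vu: "(v, (Inl -` A, Inl -` B), u) \<in> R"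
    let ?t = "Inr (v, (Inl -` A, Inl -` B), u)"
    have "(Inl w, Inl v) \<in> lei le R" using wv by (simp add: Inl_lei_iff)
    moreover have "(Inl v, A, ?t) \<in> Ri W R" using vu A by (simp add: Inl_Ri_iff)
    moreover have "(?t, ?t) \<in> lei le R" using lei_refl[OF refl R] vu by (simp add: Wi_def)
    moreover have "(?t, B, Inl u) \<in> Ri W R" using vu B by (simp add: Inr_Ri_iff)
    ultimately show "P (Inl u)" using \<open>?box\<close> by blast
  qed
next
  assume ?cond
  show ?box
  proof (intro allI impI, elim conjE)
    fix x t y u
    assume wx: "(Inl w, x) \<in> lei le R" and xt: "(x, A, t) \<in> Ri W R"
      and ty: "(t, y) \<in> lei le R" and yu: "(y, B, u) \<in> Ri W R"
    from wx obtain v where x: "x = Inl v" "(w, v) \<in> le" by (auto simp: Inl_lei_iff)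
    with xt obtain Y v0 where t: "t = Inr (v, (Inl -` A, Y), v0)" by (auto simp: Inl_Ri_iff)
    with ty obtain v' u' where y: "y = Inr (v', (Inl -` A, Y), u')" "(v, v') \<in> le"
      by (auto simp: Inr_lei_iff)
    with yu have "u = Inl u'" "(v', (Inl -` A, Inl -` B), u') \<in> R" by (auto simp: Inr_Ri_iff)
    moreover have "(w, v') \<in> le" using \<open>trans le\<close> x(2) y(2) by (rule transD)
    ultimately show "P u" using \<open>?cond\<close> by blast
  qed
qed

lemma Ri_dia_dia_Inl:
  assumes A: "A \<subseteq> Wi W R" and B: "B \<subseteq> Wi W R"
  shows "(\<exists>t. (Inl w, A, t) \<in> Ri W R \<and> (\<exists>u. (t, B, u) \<in> Ri W R \<and> P u)) \<longleftrightarrow>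
         (\<exists>v. (w, (Inl -` A, Inl -` B), v) \<in> R \<and> P (Inl v))"
proof
  assume "\<exists>t. (Inl w, A, t) \<in> Ri W R \<and> (\<exists>u. (t, B, u) \<in> Ri W R \<and> P u)"
  then obtain t u where "(Inl w, A, t) \<in> Ri W R" "(t, B, u) \<in> Ri W R" "P u" by blast
  then show "\<exists>v. (w, (Inl -` A, Inl -` B), v) \<in> R \<and> P (Inl v)"
    by (auto simp: Inl_Ri_iff Inr_Ri_iff)
next
  assume "\<exists>v. (w, (Inl -` A, Inl -` B), v) \<in> R \<and> P (Inl v)"
  then obtain v where "(w, (Inl -` A, Inl -` B), v) \<in> R" "P (Inl v)" by blast
  with A B show "\<exists>t. (Inl w, A, t) \<in> Ri W R \<and> (\<exists>u. (t, B, u) \<in> Ri W R \<and> P u)"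
    by (intro exI[of _ "Inr (w, (Inl -` A, Inl -` B), v)"]) (simp add: Inl_Ri_iff Inr_Ri_iff)
qed

lemma nsem_iff_isem_Etr:
  assumes model: "nelson_model W le R Vp Vm" and "w \<in> W"
  shows "(nsem W le R Vp Vm \<phi> True w \<longleftrightarrow>
            isem (Wi W R) (lei le R) (Ri W R) (Vi Vp Vm) (Etr \<phi>) (Inl w)) \<and>
         (nsem W le R Vp Vm \<phi> False w \<longleftrightarrow>
            isem (Wi W R) (lei le R) (Ri W R) (Vi Vp Vm) (Etr (Neg \<phi>)) (Inl w))"
proof -
  let ?N = "nsem W le R Vp Vm" and ?I = "isem (Wi W R) (lei le R) (Ri W R) (Vi Vp Vm)"
  from model have le: "le \<subseteq> W \<times> W" and refl: "\<forall>w\<in>W. (w, w) \<in> le" and "trans le"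
    and RW: "R \<subseteq> W \<times> (Pow W \<times> Pow W) \<times> W"
    unfolding nelson_model_def by simp_all
  from RW have R: "R \<subseteq> W \<times> UNIV \<times> W" by blast
  show ?thesis
    using \<open>w \<in> W\<close>
  proof (induction \<phi> arbitrary: w)
    case (Imp a b)
    then show ?case using le by (auto simp: Inl_lei_iff)
  next
    case (Cond a b)
    let ?X = "{x \<in> W. ?N a True x}" and ?Y = "{x \<in> W. ?N a False x}"
    have X: "Inl -` {x \<in> Wi W R. ?I (Etr a) x} = ?X"
      and Y: "Inl -` {x \<in> Wi W R. ?I (Etr (Neg a)) x} = ?Y"
      using Cond.IH(1) by (auto simp: Inl_in_Wi_iff)
    have "?I (Etr (Cond a b)) (Inl w) \<longleftrightarrow>
            (\<forall>v u. (w, v) \<in> le \<and> (v, (?X, ?Y), u) \<in> R \<longrightarrow> ?I (Etr b) (Inl u))"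
      using Ri_box_box_Inl[OF refl \<open>trans le\<close> R, where P = "?I (Etr b)"] X Y
      by (simp add: Let_def)
    moreover have "?I (Etr (Neg (Cond a b))) (Inl w) \<longleftrightarrow>
            (\<exists>u. (w, (?X, ?Y), u) \<in> R \<and> ?I (Etr (Neg b)) (Inl u))"
      using Ri_dia_dia_Inl[where P = "?I (Etr (Neg b))"] X Y
      by (simp add: Let_def)
    moreover have "?N (Cond a b) True w \<longleftrightarrow>
            (\<forall>v u. (w, v) \<in> le \<and> (v, (?X, ?Y), u) \<in> R \<longrightarrow> ?I (Etr b) (Inl u))"
      using Cond.IH(2) R by (auto simp: Let_def)
    moreover have "?N (Cond a b) False w \<longleftrightarrow>
            (\<exists>u. (w, (?X, ?Y), u) \<in> R \<and> ?I (Etr (Neg b)) (Inl u))"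
      using Cond.IH(2) R by (auto simp: Let_def)
    ultimately show ?case by blast
  qed (auto simp: image_iff)
qed

theorem lemma13:
  assumes "nelson_model W le R Vp Vm"
  shows "ecim (Wi W R) (lei le R) (Ri W R) (Vi Vp Vm) \<and>
         (\<forall>w\<in>W. \<forall>\<phi>. nsem W le R Vp Vm \<phi> True w \<longleftrightarrow>
                      isem (Wi W R) (lei le R) (Ri W R) (Vi Vp Vm) (Etr \<phi>) (Inl w))"
  using ecim_Mi[OF assms] nsem_iff_isem_Etr[OF assms] by blast

end
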